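(* Any timelike minimal surface in $\mathbb{L}^3$ without singularities is locally a graph of a function over the $x$-$z$ plane or over the $y$-$z$ plane, i.e. locally of the form $(x,\psi(x,z),z)$ or $(\psi(y,z),y,z)$, and the height function $\psi$ is a Born-Infeld soliton (in the variables $(x,z)$, respectively $(y,z)$).
   Context: $\mathbb{L}^3$ denotes $\mathbb{R}^3$ with the Lorentzian metric $ds^2=dx^2+dy^2-dz^2$. A surface is timelike if its induced metric is Lorentzian, and minimal if its mean curvature vanishes; "without singularities" means it is a regular immersion with nondegenerate (timelike) induced metric everywhere. A function $\psi$ on an open set of the $(u,v)$-plane is a Born-Infeld soliton (in the variables $u,v$) if $(1-\psi_v^2)\psi_{uu}+2\psi_u\psi_v\psi_{uv}-(1+\psi_u^2)\psi_{vv}=0$. *)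

theory Defs
  imports "HOL-Analysis.Analysis"
begin

definition pd1 :: "(real \<times> real \<Rightarrow> 'a::real_normed_vector) \<Rightarrow> real \<times> real \<Rightarrow> 'a" where
  "pd1 g = (\<lambda>p. frechet_derivative g (at p) (1, 0))"

definition pd2 :: "(real \<times> real \<Rightarrow> 'a::real_normed_vector) \<Rightarrow> real \<times> real \<Rightarrow> 'a" where
  "pd2 g = (\<lambda>p. frechet_derivative g (at p) (0, 1))"

fun Ck_on :: "nat \<Rightarrow> (real \<times> real) set \<Rightarrow> (real \<times> real \<Rightarrow> 'a::real_normed_vector) \<Rightarrow> bool" where
  "Ck_on 0 U g = continuous_on U g"
| "Ck_on (Suc k) U g = (g differentiable_on U \<and> Ck_on k U (pd1 g) \<and> Ck_on k U (pd2 g))"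

definition smooth_on :: "(real \<times> real) set \<Rightarrow> (real \<times> real \<Rightarrow> 'a::real_normed_vector) \<Rightarrow> bool" where
  "smooth_on U g = (\<forall>k. Ck_on k U g)"

definition lip :: "real \<times> real \<times> real \<Rightarrow> real \<times> real \<times> real \<Rightarrow> real" where
  "lip a b = fst a * fst b + fst (snd a) * fst (snd b) - snd (snd a) * snd (snd b)"

text \<open>Lorentzian cross product: lip (lcross a b) w = det(a,b,w); it is Lorentz-orthogonal to a, b.\<close>
definition lcross :: "real \<times> real \<times> real \<Rightarrow> real \<times> real \<times> real \<Rightarrow> real \<times> real \<times> real" where
  "lcross a b =
     (let (a1, a2, a3) = a; (b1, b2, b3) = b
      in (a2 * b3 - a3 * b2, a3 * b1 - a1 * b3, -(a1 * b2 - a2 * b1)))"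

definition fE where "fE f p = lip (pd1 f p) (pd1 f p)"
definition fF where "fF f p = lip (pd1 f p) (pd2 f p)"
definition fG where "fG f p = lip (pd2 f p) (pd2 f p)"

text \<open>Unit normal (for a timelike surface the normal is spacelike).\<close>
definition unit_normal :: "(real \<times> real \<Rightarrow> real \<times> real \<times> real) \<Rightarrow> real \<times> real \<Rightarrow> real \<times> real \<times> real" where
  "unit_normal f p = (let \<nu> = lcross (pd1 f p) (pd2 f p) in (1 / sqrt \<bar>lip \<nu> \<nu>\<bar>) *\<^sub>R \<nu>)"

definition sL where "sL f p = lip (pd1 (pd1 f) p) (unit_normal f p)"
definition sM where "sM f p = lip (pd2 (pd1 f) p) (unit_normal f p)"
definition sN where "sN f p = lip (pd2 (pd2 f) p) (unit_normal f p)"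

definition mean_curvature :: "(real \<times> real \<Rightarrow> real \<times> real \<times> real) \<Rightarrow> real \<times> real \<Rightarrow> real" where
  "mean_curvature f p =
     (fE f p * sN f p - 2 * fF f p * sM f p + fG f p * sL f p)
       / (2 * (fE f p * fG f p - (fF f p)\<^sup>2))"

definition regular_timelike_at :: "(real \<times> real \<Rightarrow> real \<times> real \<times> real) \<Rightarrow> real \<times> real \<Rightarrow> bool" where
  "regular_timelike_at f p =
     (f differentiable (at p) \<and> inj (frechet_derivative f (at p))
      \<and> fE f p * fG f p - (fF f p)\<^sup>2 < 0)"

definition born_infeld :: "(real \<times> real) set \<Rightarrow> (real \<times> real \<Rightarrow> real) \<Rightarrow> bool" where
  "born_infeld W \<psi> = (\<forall>q\<in>W.
     (1 - (pd2 \<psi> q)\<^sup>2) * pd1 (pd1 \<psi>) q + 2 * pd1 \<psi> q * pd2 \<psi> q * pd2 (pd1 \<psi>) q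
       - (1 + (pd1 \<psi> q)\<^sup>2) * pd2 (pd2 \<psi>) q = 0)"

end

theory Submission
  imports Defs
begin

text \<open>
  Let \<open>n = f\<^sub>u \<times> f\<^sub>v\<close> be the Lorentzian cross product of the partials. On a regular timelike
  surface \<open>\<langle>n,n\<rangle> = F\<^sup>2 - E G > 0\<close>, so \<open>n\<close> is spacelike and hence its \<open>x\<close>- or \<open>y\<close>-component
  is nonzero. These components are (up to sign) the Jacobians of the projections of \<open>f\<close> to the
  \<open>y\<close>-\<open>z\<close> and \<open>x\<close>-\<open>z\<close> planes, so by the inverse function theorem one of the projections
  is a local diffeomorphism and the surface is locally a graph over that plane.
  Minimality means that \<open>E \<langle>n,f\<^sub>v\<^sub>v\<rangle> - 2 F \<langle>n,f\<^sub>u\<^sub>v\<rangle> + G \<langle>n,f\<^sub>u\<^sub>u\<rangle>\<close> vanishes; this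
  quantity gets multiplied by the cube of the Jacobian under reparametrisation, and for a graph
  it is, up to sign, exactly the Born-Infeld operator applied to the height function.
\<close>

section \<open>Partial derivatives in the plane\<close>

definition has_partials :: "(real \<times> real \<Rightarrow> 'a::real_normed_vector) \<Rightarrow> 'a \<Rightarrow> 'a \<Rightarrow> real \<times> real \<Rightarrow> bool"
  where "has_partials g A B p \<longleftrightarrow> (g has_derivative (\<lambda>h. fst h *\<^sub>R A + snd h *\<^sub>R B)) (at p)"

lemma has_partials_pd:
  assumes "has_partials g A B p"
  shows "pd1 g p = A" "pd2 g p = B"
  using frechet_derivative_at[OF assms[unfolded has_partials_def]]
  by (auto simp: pd1_def pd2_def dest: fun_cong[where x="(1,0)"] fun_cong[where x="(0,1)"])

lemma has_partials_imp_differentiable: "has_partials g A B p \<Longrightarrow> g differentiable (at p)"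
  unfolding has_partials_def differentiable_def by blast

lemma differentiable_imp_has_partials:
  assumes "g differentiable (at p)"
  shows "has_partials g (pd1 g p) (pd2 g p) p"
proof -
  let ?D = "frechet_derivative g (at p)"
  have D: "(g has_derivative ?D) (at p)"
    using assms frechet_derivative_works by blast
  interpret D: bounded_linear ?D
    using has_derivative_bounded_linear[OF D] .
  have "?D h = fst h *\<^sub>R pd1 g p + snd h *\<^sub>R pd2 g p" for h
  proof -
    have "?D h = ?D (fst h *\<^sub>R (1,0) + snd h *\<^sub>R (0,1))"
      by (cases h) simp
    also have "\<dots> = fst h *\<^sub>R ?D (1,0) + snd h *\<^sub>R ?D (0,1)"
      by (simp only: D.add D.scale)
    finally show ?thesis
      unfolding pd1_def pd2_def .
  qed
  then have "?D = (\<lambda>h. fst h *\<^sub>R pd1 g p + snd h *\<^sub>R pd2 g p)"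
    by (intro ext)
  with D show ?thesis
    by (simp add: has_partials_def)
qed

lemma has_partials_const: "has_partials (\<lambda>s. c) 0 0 p"
  unfolding has_partials_def by (rule has_derivative_eq_rhs, rule has_derivative_const) auto

lemma has_partials_ident: "has_partials (\<lambda>s. s) (1,0) (0,1) p"
  unfolding has_partials_def by (rule has_derivative_eq_rhs, rule has_derivative_ident) auto

lemma has_partials_add:
  "has_partials g A B p \<Longrightarrow> has_partials k C D p \<Longrightarrow> has_partials (\<lambda>s. g s + k s) (A + C) (B + D) p"
  unfolding has_partials_def
  by (rule has_derivative_eq_rhs, rule has_derivative_add, assumption+)
     (auto simp: algebra_simps)

lemma has_partials_scaleR:
  assumes "has_partials a a1 a2 p" "has_partials v V1 V2 p"
  shows "has_partials (\<lambda>s. a s *\<^sub>R v s) (a1 *\<^sub>R v p + a p *\<^sub>R V1) (a2 *\<^sub>R v p + a p *\<^sub>R V2) p"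
  using assms unfolding has_partials_def
  by (rule has_derivative_eq_rhs[OF has_derivative_scaleR])
     (auto simp: algebra_simps)

lemma has_partials_linear:
  assumes "bounded_linear L" "has_partials g A B p"
  shows "has_partials (\<lambda>s. L (g s)) (L A) (L B) p"
  using assms unfolding has_partials_def
  by (rule has_derivative_eq_rhs[OF bounded_linear.has_derivative])
     (auto simp: bounded_linear.linear[OF assms(1)] linear_add linear_scale)

lemma has_partials_Pair:
  assumes "has_partials a A1 B1 p" "has_partials b A2 B2 p"
  shows "has_partials (\<lambda>s. (a s, b s)) (A1, A2) (B1, B2) p"
  using assms unfolding has_partials_def
  by (rule has_derivative_eq_rhs[OF has_derivative_Pair]) auto

lemma has_partials_fst: "has_partials fst 1 0 p"
  using has_partials_linear[OF bounded_linear_fst has_partials_ident] by simp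

lemma has_partials_snd: "has_partials snd 0 1 p"
  using has_partials_linear[OF bounded_linear_snd has_partials_ident] by simp

lemma has_partials_compose:
  assumes "has_partials G A B p" "has_partials \<phi> P Q (G p)"
  shows "has_partials (\<lambda>s. \<phi> (G s))
           (fst A *\<^sub>R P + snd A *\<^sub>R Q) (fst B *\<^sub>R P + snd B *\<^sub>R Q) p"
  using assms unfolding has_partials_def
  by (rule has_derivative_eq_rhs[OF has_derivative_compose[where g=\<phi>]])
     (auto simp: algebra_simps)

lemma has_partials_inverse:
  assumes "has_partials a A B p" "a p \<noteq> (0::real)"
  shows "has_partials (\<lambda>s. inverse (a s))
           (- (A * inverse (a p) * inverse (a p))) (- (B * inverse (a p) * inverse (a p))) p"
  using Deriv.has_derivative_inverse[OF assms(2) assms(1)[unfolded has_partials_def]]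
  unfolding has_partials_def by (rule has_derivative_eq_rhs) (auto simp: algebra_simps)

lemma pd_linear:
  assumes "bounded_linear L" "g differentiable (at p)"
  shows "pd1 (\<lambda>s. L (g s)) p = L (pd1 g p)" "pd2 (\<lambda>s. L (g s)) p = L (pd2 g p)"
  using has_partials_pd[OF has_partials_linear[OF assms(1) differentiable_imp_has_partials[OF assms(2)]]]
  by simp_all

lemma frechet_derivative_cong_open:
  assumes "open U" "p \<in> U" "\<And>x. x \<in> U \<Longrightarrow> g x = k x"
  shows "frechet_derivative g (at p) = frechet_derivative k (at p)"
proof -
  have "(g has_derivative D) (at p) \<longleftrightarrow> (k has_derivative D) (at p)" for D
    using has_derivative_transform_within_open[of g D p UNIV U k]
      has_derivative_transform_within_open[of k D p UNIV U g] assms by auto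
  then show ?thesis
    unfolding frechet_derivative_def by simp
qed

lemma pd_cong_open:
  assumes "open U" "p \<in> U" "\<And>x. x \<in> U \<Longrightarrow> g x = k x"
  shows "pd1 g p = pd1 k p" "pd2 g p = pd2 k p"
  using frechet_derivative_cong_open[OF assms] by (auto simp: pd1_def pd2_def)

lemma differentiable_cong_open:
  assumes "open U" "p \<in> U" "\<And>x. x \<in> U \<Longrightarrow> g x = k x" "g differentiable (at p)"
  shows "k differentiable (at p)"
  using assms(4) has_derivative_transform_within_open[of g _ p UNIV U k] assms(1-3)
  unfolding differentiable_def by blast

lemma pd1_has_real_derivative:
  fixes \<phi> :: "real \<times> real \<Rightarrow> real"
  assumes "\<phi> differentiable (at (s, c))"
  shows "((\<lambda>t. \<phi> (t, c)) has_real_derivative pd1 \<phi> (s, c)) (at s)"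
proof -
  have "((\<lambda>t::real. (t, c)) has_derivative (\<lambda>h. (h, 0))) (at s)"
    by (rule has_derivative_eq_rhs, rule has_derivative_Pair[OF has_derivative_ident has_derivative_const]) auto
  from has_derivative_compose[OF this differentiable_imp_has_partials[OF assms, unfolded has_partials_def]]
  show ?thesis
    unfolding has_field_derivative_def by (rule has_derivative_eq_rhs) (auto simp: mult.commute)
qed

lemma pd2_has_real_derivative:
  fixes \<phi> :: "real \<times> real \<Rightarrow> real"
  assumes "\<phi> differentiable (at (c, s))"
  shows "((\<lambda>t. \<phi> (c, t)) has_real_derivative pd2 \<phi> (c, s)) (at s)"
proof -
  have "((\<lambda>t::real. (c, t)) has_derivative (\<lambda>h. (0, h))) (at s)"
    by (rule has_derivative_eq_rhs, rule has_derivative_Pair[OF has_derivative_const has_derivative_ident]) auto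
  from has_derivative_compose[OF this differentiable_imp_has_partials[OF assms, unfolded has_partials_def]]
  show ?thesis
    unfolding has_field_derivative_def by (rule has_derivative_eq_rhs) (auto simp: mult.commute)
qed

section \<open>Functions of class \<open>C\<^sup>k\<close>\<close>

lemma Ck_on_imp_continuous_on: "Ck_on n U g \<Longrightarrow> continuous_on U g"
  by (cases n) (simp_all add: differentiable_imp_continuous_on)

lemma Ck_on_SucD: "Ck_on (Suc n) U g \<Longrightarrow> Ck_on n U g"
proof (induction n arbitrary: g)
  case 0
  then show ?case by (auto intro: differentiable_imp_continuous_on)
next
  case (Suc n)
  have "g differentiable_on U" "Ck_on (Suc n) U (pd1 g)" "Ck_on (Suc n) U (pd2 g)"
    using Suc.prems by simp_all
  then show ?case
    using Suc.IH[of "pd1 g"] Suc.IH[of "pd2 g"] by simp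
qed

lemma Ck_on_2D:
  assumes "Ck_on 2 U g"
  shows "Ck_on (Suc 0) U g" "Ck_on (Suc 0) U (pd1 g)" "Ck_on (Suc 0) U (pd2 g)"
  using assms Ck_on_SucD[of "Suc 0" U g] by (simp_all add: numeral_2_eq_2)

lemma Ck_on_imp_has_partials:
  "open U \<Longrightarrow> Ck_on (Suc n) U g \<Longrightarrow> x \<in> U \<Longrightarrow> has_partials g (pd1 g x) (pd2 g x) x"
  by (auto simp: differentiable_on_eq_differentiable_at intro!: differentiable_imp_has_partials)

lemma Ck_on_cong:
  assumes "open U" "Ck_on n U g" "\<And>x. x \<in> U \<Longrightarrow> g x = k x"
  shows "Ck_on n U k"
  using assms(2,3)
proof (induction n arbitrary: g k)
  case 0
  then show ?case using continuous_on_cong[of U U g k] by simp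
next
  case (Suc n)
  have "\<forall>x\<in>U. k differentiable (at x)"
    using Suc.prems differentiable_cong_open[OF assms(1), of _ g k]
    by (simp add: differentiable_on_eq_differentiable_at[OF assms(1)])
  moreover have "Ck_on n U (pd1 k)" "Ck_on n U (pd2 k)"
    using Suc.IH[of "pd1 g" "pd1 k"] Suc.IH[of "pd2 g" "pd2 k"] Suc.prems
      pd_cong_open[OF assms(1), of _ g k] by simp_all
  ultimately show ?case
    by (simp add: differentiable_on_eq_differentiable_at[OF assms(1)])
qed

lemma Ck_on_subset:
  assumes "V \<subseteq> U"
  shows "Ck_on k U g \<Longrightarrow> Ck_on k V g"
proof (induction k arbitrary: g)
  case 0
  then show ?case using continuous_on_subset assms by auto
next
  case (Suc k)
  show ?case
    using Suc.prems Suc.IH[of "pd1 g"] Suc.IH[of "pd2 g"] differentiable_on_subset[OF _ assms] by auto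
qed

lemma Ck_on_SucI:
  assumes "open U" "\<And>x. x \<in> U \<Longrightarrow> has_partials g (A x) (B x) x" "Ck_on n U A" "Ck_on n U B"
  shows "Ck_on (Suc n) U g"
proof -
  have "\<forall>x\<in>U. g differentiable (at x)"
    using assms(2) has_partials_imp_differentiable by blast
  then have "g differentiable_on U"
    using assms(1) by (simp add: differentiable_on_eq_differentiable_at)
  moreover have "Ck_on n U (pd1 g)" "Ck_on n U (pd2 g)"
    using Ck_on_cong[OF assms(1,3)] Ck_on_cong[OF assms(1,4)] has_partials_pd[OF assms(2)] by metis+
  ultimately show ?thesis by simp
qed

context
  fixes U :: "(real \<times> real) set"
  assumes U: "open U"
begin

lemma Ck_on_const: "Ck_on n U (\<lambda>s. c)"
proof (induction n arbitrary: c)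
  case (Suc n)
  then show ?case
    by (intro Ck_on_SucI[where A="\<lambda>_. 0" and B="\<lambda>_. 0"] has_partials_const U)
qed simp

lemma Ck_on_linear: "bounded_linear L \<Longrightarrow> Ck_on n U g \<Longrightarrow> Ck_on n U (\<lambda>s. L (g s))"
proof (induction n arbitrary: g)
  case 0
  then show ?case using bounded_linear.continuous_on by auto
next
  case (Suc n)
  show ?case
    using Suc has_partials_linear[OF Suc.prems(1) Ck_on_imp_has_partials[OF U Suc.prems(2)]]
    by (intro Ck_on_SucI[OF U, where A="\<lambda>x. L (pd1 g x)" and B="\<lambda>x. L (pd2 g x)"]) simp_all
qed

lemma Ck_on_add: "Ck_on n U g \<Longrightarrow> Ck_on n U k \<Longrightarrow> Ck_on n U (\<lambda>s. g s + k s)"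
proof (induction n arbitrary: g k)
  case 0
  then show ?case by (simp add: continuous_on_add)
next
  case (Suc n)
  show ?case
    using Suc has_partials_add[OF Ck_on_imp_has_partials[OF U Suc.prems(1)]
        Ck_on_imp_has_partials[OF U Suc.prems(2)]]
    by (intro Ck_on_SucI[OF U, where A="\<lambda>x. pd1 g x + pd1 k x" and B="\<lambda>x. pd2 g x + pd2 k x"])
       simp_all
qed

lemma Ck_on_scaleR: "Ck_on n U a \<Longrightarrow> Ck_on n U v \<Longrightarrow> Ck_on n U (\<lambda>s. a s *\<^sub>R v s)"
proof (induction n arbitrary: a v)
  case 0
  then show ?case by (simp add: continuous_on_scaleR)
next
  case (Suc n)
  have "Ck_on n U a" "Ck_on n U v"
    using Suc.prems Ck_on_SucD by blast+
  then show ?case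
    using Suc has_partials_scaleR[OF Ck_on_imp_has_partials[OF U Suc.prems(1)]
        Ck_on_imp_has_partials[OF U Suc.prems(2)]]
    by (intro Ck_on_SucI[OF U, where A="\<lambda>x. pd1 a x *\<^sub>R v x + a x *\<^sub>R pd1 v x"
                                   and B="\<lambda>x. pd2 a x *\<^sub>R v x + a x *\<^sub>R pd2 v x"] Ck_on_add)
       simp_all
qed

lemma Ck_on_mult:
  fixes a :: "real \<times> real \<Rightarrow> real"
  shows "Ck_on n U a \<Longrightarrow> Ck_on n U b \<Longrightarrow> Ck_on n U (\<lambda>s. a s * b s)"
  using Ck_on_scaleR[of n a b] by simp

lemma Ck_on_minus: "Ck_on n U g \<Longrightarrow> Ck_on n U (\<lambda>s. - g s)"
  using Ck_on_linear[OF bounded_linear_minus[OF bounded_linear_ident], of n g] by simp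

lemma Ck_on_diff: "Ck_on n U g \<Longrightarrow> Ck_on n U k \<Longrightarrow> Ck_on n U (\<lambda>s. g s - k s)"
  using Ck_on_add[OF _ Ck_on_minus, of n g k] by simp

lemma Ck_on_Pair: "Ck_on n U a \<Longrightarrow> Ck_on n U b \<Longrightarrow> Ck_on n U (\<lambda>s. (a s, b s))"
proof (induction n arbitrary: a b)
  case 0
  then show ?case by (simp add: continuous_on_Pair)
next
  case (Suc n)
  show ?case
    using Suc has_partials_Pair[OF Ck_on_imp_has_partials[OF U Suc.prems(1)]
        Ck_on_imp_has_partials[OF U Suc.prems(2)]]
    by (intro Ck_on_SucI[OF U, where A="\<lambda>x. (pd1 a x, pd1 b x)" and B="\<lambda>x. (pd2 a x, pd2 b x)"])
       simp_all
qed

lemma Ck_on_fst: "Ck_on n U g \<Longrightarrow> Ck_on n U (\<lambda>s. fst (g s))"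
  and Ck_on_snd: "Ck_on n U g \<Longrightarrow> Ck_on n U (\<lambda>s. snd (g s))"
  by (simp_all add: Ck_on_linear bounded_linear_fst bounded_linear_snd)

lemma Ck_on_inverse:
  fixes a :: "real \<times> real \<Rightarrow> real"
  shows "Ck_on n U a \<Longrightarrow> \<forall>x\<in>U. a x \<noteq> 0 \<Longrightarrow> Ck_on n U (\<lambda>s. inverse (a s))"
proof (induction n arbitrary: a)
  case 0
  then show ?case by (simp add: continuous_on_inverse)
next
  case (Suc n)
  have "Ck_on n U a"
    using Suc.prems Ck_on_SucD by blast
  then have "Ck_on n U (\<lambda>s. inverse (a s))"
    using Suc by blast
  then show ?case
    using Suc has_partials_inverse[OF Ck_on_imp_has_partials[OF U Suc.prems(1)]]
    by (intro Ck_on_SucI[OF U, where A="\<lambda>x. - (pd1 a x * inverse (a x) * inverse (a x))"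
                                   and B="\<lambda>x. - (pd2 a x * inverse (a x) * inverse (a x))"]
              Ck_on_minus Ck_on_mult) simp_all
qed

lemma Ck_on_divide:
  fixes a b :: "real \<times> real \<Rightarrow> real"
  shows "Ck_on n U a \<Longrightarrow> Ck_on n U b \<Longrightarrow> \<forall>x\<in>U. b x \<noteq> 0 \<Longrightarrow> Ck_on n U (\<lambda>s. a s / b s)"
  using Ck_on_mult[OF _ Ck_on_inverse] by (simp add: divide_inverse)

end

lemma Ck_on_compose:
  assumes U: "open U" and V: "open V"
  shows "Ck_on n V \<phi> \<Longrightarrow> Ck_on n U G \<Longrightarrow> G ` U \<subseteq> V \<Longrightarrow> Ck_on n U (\<lambda>s. \<phi> (G s))"
proof (induction n arbitrary: \<phi> G)
  case 0
  then show ?case using continuous_on_compose2[of V \<phi> U G] by simp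
next
  case (Suc n)
  have G: "Ck_on n U G"
    using Suc.prems Ck_on_SucD by blast
  have \<phi>': "Ck_on n U (\<lambda>s. pd1 \<phi> (G s))" "Ck_on n U (\<lambda>s. pd2 \<phi> (G s))"
    using Suc.IH[OF _ G] Suc.prems by simp_all
  have G': "Ck_on n U (\<lambda>s. fst (pd1 G s))" "Ck_on n U (\<lambda>s. snd (pd1 G s))"
    "Ck_on n U (\<lambda>s. fst (pd2 G s))" "Ck_on n U (\<lambda>s. snd (pd2 G s))"
    using Suc.prems(2) by (simp_all add: Ck_on_fst Ck_on_snd U)
  have "Ck_on n U (\<lambda>x. fst (pd1 G x) *\<^sub>R pd1 \<phi> (G x) + snd (pd1 G x) *\<^sub>R pd2 \<phi> (G x))"
    "Ck_on n U (\<lambda>x. fst (pd2 G x) *\<^sub>R pd1 \<phi> (G x) + snd (pd2 G x) *\<^sub>R pd2 \<phi> (G x))"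
    using Ck_on_add[OF U Ck_on_scaleR[OF U G'(1) \<phi>'(1)] Ck_on_scaleR[OF U G'(2) \<phi>'(2)]]
      Ck_on_add[OF U Ck_on_scaleR[OF U G'(3) \<phi>'(1)] Ck_on_scaleR[OF U G'(4) \<phi>'(2)]]
    by simp_all
  moreover have "has_partials (\<lambda>s. \<phi> (G s))
      (fst (pd1 G x) *\<^sub>R pd1 \<phi> (G x) + snd (pd1 G x) *\<^sub>R pd2 \<phi> (G x))
      (fst (pd2 G x) *\<^sub>R pd1 \<phi> (G x) + snd (pd2 G x) *\<^sub>R pd2 \<phi> (G x)) x" if "x \<in> U" for x
    using that Suc.prems(3) has_partials_compose[OF Ck_on_imp_has_partials[OF U Suc.prems(2) that]
        Ck_on_imp_has_partials[OF V Suc.prems(1)]] by blast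
  ultimately show ?case
    by (rule Ck_on_SucI[OF U, rotated])
qed

section \<open>Second partial derivatives\<close>

lemma mixed_difference_pd2_pd1:
  fixes \<phi> :: "real \<times> real \<Rightarrow> real"
  assumes "0 < t" and box: "\<And>u v. x \<le> u \<Longrightarrow> u \<le> x + t \<Longrightarrow> y \<le> v \<Longrightarrow> v \<le> y + t \<Longrightarrow> (u, v) \<in> U"
    and "\<forall>z\<in>U. \<phi> differentiable (at z)" "\<forall>z\<in>U. pd1 \<phi> differentiable (at z)"
  obtains \<xi> \<eta> where "x < \<xi>" "\<xi> < x + t" "y < \<eta>" "\<eta> < y + t"
    "\<phi> (x + t, y + t) - \<phi> (x + t, y) - \<phi> (x, y + t) + \<phi> (x, y) = t * t * pd2 (pd1 \<phi>) (\<xi>, \<eta>)"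
proof -
  have "\<exists>\<xi>. x < \<xi> \<and> \<xi> < x + t \<and>
    (\<phi> (x + t, y + t) - \<phi> (x + t, y)) - (\<phi> (x, y + t) - \<phi> (x, y))
       = (x + t - x) * (pd1 \<phi> (\<xi>, y + t) - pd1 \<phi> (\<xi>, y))"
    by (rule MVT2[of x "x + t" "\<lambda>s. \<phi> (s, y + t) - \<phi> (s, y)"])
       (use assms in \<open>auto intro!: DERIV_diff pd1_has_real_derivative\<close>)
  then obtain \<xi> where \<xi>: "x < \<xi>" "\<xi> < x + t"
    "(\<phi> (x + t, y + t) - \<phi> (x + t, y)) - (\<phi> (x, y + t) - \<phi> (x, y))
       = t * (pd1 \<phi> (\<xi>, y + t) - pd1 \<phi> (\<xi>, y))"
    by auto
  have "\<exists>\<eta>. y < \<eta> \<and> \<eta> < y + t \<and>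
    pd1 \<phi> (\<xi>, y + t) - pd1 \<phi> (\<xi>, y) = (y + t - y) * pd2 (pd1 \<phi>) (\<xi>, \<eta>)"
    by (rule MVT2[of y "y + t" "\<lambda>r. pd1 \<phi> (\<xi>, r)"])
       (use assms \<xi> in \<open>auto intro!: pd2_has_real_derivative\<close>)
  then obtain \<eta> where \<eta>: "y < \<eta>" "\<eta> < y + t"
    "pd1 \<phi> (\<xi>, y + t) - pd1 \<phi> (\<xi>, y) = t * pd2 (pd1 \<phi>) (\<xi>, \<eta>)"
    by auto
  show ?thesis
    using that[OF \<xi>(1,2) \<eta>(1,2)] \<xi>(3) \<eta>(3) by (simp add: algebra_simps)
qed

lemma mixed_difference_pd1_pd2:
  fixes \<phi> :: "real \<times> real \<Rightarrow> real"
  assumes "0 < t" and box: "\<And>u v. x \<le> u \<Longrightarrow> u \<le> x + t \<Longrightarrow> y \<le> v \<Longrightarrow> v \<le> y + t \<Longrightarrow> (u, v) \<in> U"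
    and "\<forall>z\<in>U. \<phi> differentiable (at z)" "\<forall>z\<in>U. pd2 \<phi> differentiable (at z)"
  obtains \<xi> \<eta> where "x < \<xi>" "\<xi> < x + t" "y < \<eta>" "\<eta> < y + t"
    "\<phi> (x + t, y + t) - \<phi> (x + t, y) - \<phi> (x, y + t) + \<phi> (x, y) = t * t * pd1 (pd2 \<phi>) (\<xi>, \<eta>)"
proof -
  have "\<exists>\<eta>. y < \<eta> \<and> \<eta> < y + t \<and>
    (\<phi> (x + t, y + t) - \<phi> (x, y + t)) - (\<phi> (x + t, y) - \<phi> (x, y))
       = (y + t - y) * (pd2 \<phi> (x + t, \<eta>) - pd2 \<phi> (x, \<eta>))"
    by (rule MVT2[of y "y + t" "\<lambda>r. \<phi> (x + t, r) - \<phi> (x, r)"])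
       (use assms in \<open>auto intro!: DERIV_diff pd2_has_real_derivative\<close>)
  then obtain \<eta> where \<eta>: "y < \<eta>" "\<eta> < y + t"
    "(\<phi> (x + t, y + t) - \<phi> (x, y + t)) - (\<phi> (x + t, y) - \<phi> (x, y))
       = t * (pd2 \<phi> (x + t, \<eta>) - pd2 \<phi> (x, \<eta>))"
    by auto
  have "\<exists>\<xi>. x < \<xi> \<and> \<xi> < x + t \<and>
    pd2 \<phi> (x + t, \<eta>) - pd2 \<phi> (x, \<eta>) = (x + t - x) * pd1 (pd2 \<phi>) (\<xi>, \<eta>)"
    by (rule MVT2[of x "x + t" "\<lambda>s. pd2 \<phi> (s, \<eta>)"])
       (use assms \<eta> in \<open>auto intro!: pd1_has_real_derivative\<close>)
  then obtain \<xi> where \<xi>: "x < \<xi>" "\<xi> < x + t"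
    "pd2 \<phi> (x + t, \<eta>) - pd2 \<phi> (x, \<eta>) = t * pd1 (pd2 \<phi>) (\<xi>, \<eta>)"
    by auto
  show ?thesis
    using that[OF \<xi>(1,2) \<eta>(1,2)] \<xi>(3) \<eta>(3) by (simp add: algebra_simps)
qed

lemma mixed_partials_agree_nearby:
  fixes \<phi> :: "real \<times> real \<Rightarrow> real"
  assumes "d > 0" "ball q d \<subseteq> U"
    and diff: "\<forall>z\<in>U. \<phi> differentiable (at z)" "\<forall>z\<in>U. pd1 \<phi> differentiable (at z)"
      "\<forall>z\<in>U. pd2 \<phi> differentiable (at z)"
  obtains z z' where "z \<in> ball q d" "z' \<in> ball q d" "pd2 (pd1 \<phi>) z = pd1 (pd2 \<phi>) z'"
proof -
  obtain x y where q: "q = (x, y)"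
    by (cases q)
  define t where "t = d / 3"
  have "0 < t"
    using assms(1) by (simp add: t_def)
  have box: "(u, v) \<in> ball q d" if "x \<le> u" "u \<le> x + t" "y \<le> v" "v \<le> y + t" for u v
  proof -
    have "dist (u, v) q \<le> \<bar>u - x\<bar> + \<bar>v - y\<bar>"
      using norm_Pair_le[of "u - x" "v - y"] by (simp add: q dist_norm)
    also have "\<dots> < d"
      using that assms(1) by (simp add: t_def)
    finally show ?thesis
      by (simp add: dist_commute)
  qed
  then have boxU: "(u, v) \<in> U" if "x \<le> u" "u \<le> x + t" "y \<le> v" "v \<le> y + t" for u v
    using that assms(2) by blast
  obtain \<xi> \<eta> where \<xi>\<eta>: "x < \<xi>" "\<xi> < x + t" "y < \<eta>" "\<eta> < y + t"
    "\<phi> (x + t, y + t) - \<phi> (x + t, y) - \<phi> (x, y + t) + \<phi> (x, y) = t * t * pd2 (pd1 \<phi>) (\<xi>, \<eta>)"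
    using mixed_difference_pd2_pd1[OF \<open>0 < t\<close> boxU diff(1,2)] by blast
  obtain \<xi>' \<eta>' where \<xi>\<eta>': "x < \<xi>'" "\<xi>' < x + t" "y < \<eta>'" "\<eta>' < y + t"
    "\<phi> (x + t, y + t) - \<phi> (x + t, y) - \<phi> (x, y + t) + \<phi> (x, y) = t * t * pd1 (pd2 \<phi>) (\<xi>', \<eta>')"
    using mixed_difference_pd1_pd2[OF \<open>0 < t\<close> boxU diff(1,3)] by blast
  have "pd2 (pd1 \<phi>) (\<xi>, \<eta>) = pd1 (pd2 \<phi>) (\<xi>', \<eta>')"
    using \<xi>\<eta>(5) \<xi>\<eta>'(5) \<open>0 < t\<close> by simp
  with box[of \<xi> \<eta>] box[of \<xi>' \<eta>'] \<xi>\<eta> \<xi>\<eta>' show ?thesis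
    by (intro that) auto
qed

lemma pd_commute_real:
  fixes \<phi> :: "real \<times> real \<Rightarrow> real"
  assumes U: "open U" and C2: "Ck_on 2 U \<phi>" and q: "q \<in> U"
  shows "pd1 (pd2 \<phi>) q = pd2 (pd1 \<phi>) q"
proof -
  have diff: "\<forall>z\<in>U. \<phi> differentiable (at z)" "\<forall>z\<in>U. pd1 \<phi> differentiable (at z)"
    "\<forall>z\<in>U. pd2 \<phi> differentiable (at z)"
    using C2 U by (simp_all add: numeral_2_eq_2 differentiable_on_eq_differentiable_at)
  have cont: "continuous_on U (pd2 (pd1 \<phi>))" "continuous_on U (pd1 (pd2 \<phi>))"
    using C2 by (simp_all add: numeral_2_eq_2)
  have small: "\<bar>pd1 (pd2 \<phi>) q - pd2 (pd1 \<phi>) q\<bar> < 2 * e" if "e > 0" for e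
  proof -
    obtain d0 where "d0 > 0" "ball q d0 \<subseteq> U"
      using U q open_contains_ball by blast
    moreover obtain d1 where "d1 > 0" "\<forall>z\<in>U. dist z q < d1 \<longrightarrow> \<bar>pd2 (pd1 \<phi>) z - pd2 (pd1 \<phi>) q\<bar> < e"
      using cont(1) q \<open>e > 0\<close> unfolding continuous_on_iff dist_real_def by blast
    moreover obtain d2 where "d2 > 0" "\<forall>z\<in>U. dist z q < d2 \<longrightarrow> \<bar>pd1 (pd2 \<phi>) z - pd1 (pd2 \<phi>) q\<bar> < e"
      using cont(2) q \<open>e > 0\<close> unfolding continuous_on_iff dist_real_def by blast
    moreover have "min d0 (min d1 d2) > 0" "ball q (min d0 (min d1 d2)) \<subseteq> U"
      using calculation by auto
    then obtain z z' where "z \<in> ball q (min d0 (min d1 d2))" "z' \<in> ball q (min d0 (min d1 d2))"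
      "pd2 (pd1 \<phi>) z = pd1 (pd2 \<phi>) z'"
      using mixed_partials_agree_nearby[OF _ _ diff] by blast
    ultimately show ?thesis
      by (smt (verit) dist_commute mem_ball min_less_iff_conj subsetD)
  qed
  have "\<bar>pd1 (pd2 \<phi>) q - pd2 (pd1 \<phi>) q\<bar> \<le> 0 + e" if "e > 0" for e
    using small[of "e / 2"] that by simp
  then have "\<bar>pd1 (pd2 \<phi>) q - pd2 (pd1 \<phi>) q\<bar> \<le> 0"
    by (rule field_le_epsilon)
  then show ?thesis
    by simp
qed

lemma pd_commute:
  fixes f :: "real \<times> real \<Rightarrow> 'a::euclidean_space"
  assumes U: "open U" and C2: "Ck_on 2 U f" and q: "q \<in> U"
  shows "pd1 (pd2 f) q = pd2 (pd1 f) q"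
proof (rule euclidean_eqI)
  fix b :: 'a
  let ?L = "\<lambda>v. v \<bullet> b"
  have L: "bounded_linear ?L"
    by (rule bounded_linear_inner_left)
  have diff: "\<forall>x\<in>U. f differentiable (at x)" "\<forall>x\<in>U. pd1 f differentiable (at x)"
    "\<forall>x\<in>U. pd2 f differentiable (at x)"
    using C2 U by (simp_all add: numeral_2_eq_2 differentiable_on_eq_differentiable_at)
  have "pd1 (pd2 (\<lambda>s. ?L (f s))) q = pd1 (\<lambda>s. ?L (pd2 f s)) q"
    by (rule pd_cong_open(1)[OF U q]) (use diff in \<open>simp add: pd_linear[OF L]\<close>)
  moreover have "pd2 (pd1 (\<lambda>s. ?L (f s))) q = pd2 (\<lambda>s. ?L (pd1 f s)) q"
    by (rule pd_cong_open(2)[OF U q]) (use diff in \<open>simp add: pd_linear[OF L]\<close>)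
  moreover have "pd1 (pd2 (\<lambda>s. ?L (f s))) q = pd2 (pd1 (\<lambda>s. ?L (f s))) q"
    by (rule pd_commute_real[OF U Ck_on_linear[OF U L C2] q])
  ultimately show "pd1 (pd2 f) q \<bullet> b = pd2 (pd1 f) q \<bullet> b"
    using diff q by (simp add: pd_linear[OF L])
qed

lemma second_partials_compose:
  fixes f :: "real \<times> real \<Rightarrow> 'a::euclidean_space" and G :: "real \<times> real \<Rightarrow> real \<times> real"
  assumes U: "open U" and W: "open W" and f: "Ck_on 2 U f" and G: "Ck_on 2 W G"
    and GW: "G ` W \<subseteq> U" and s: "s \<in> W"
  defines "A1 \<equiv> fst (pd1 G s)" and "A2 \<equiv> snd (pd1 G s)" and "B1 \<equiv> fst (pd2 G s)"
    and "B2 \<equiv> snd (pd2 G s)" and "q \<equiv> G s"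
  shows "pd1 (pd1 (\<lambda>x. f (G x))) s =
      fst (pd1 (pd1 G) s) *\<^sub>R pd1 f q + snd (pd1 (pd1 G) s) *\<^sub>R pd2 f q
      + (A1 * A1) *\<^sub>R pd1 (pd1 f) q + (A1 * A2 + A2 * A1) *\<^sub>R pd2 (pd1 f) q + (A2 * A2) *\<^sub>R pd2 (pd2 f) q"
    and "pd2 (pd1 (\<lambda>x. f (G x))) s =
      fst (pd2 (pd1 G) s) *\<^sub>R pd1 f q + snd (pd2 (pd1 G) s) *\<^sub>R pd2 f q
      + (A1 * B1) *\<^sub>R pd1 (pd1 f) q + (A1 * B2 + A2 * B1) *\<^sub>R pd2 (pd1 f) q + (A2 * B2) *\<^sub>R pd2 (pd2 f) q"
    and "pd2 (pd2 (\<lambda>x. f (G x))) s =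
      fst (pd2 (pd2 G) s) *\<^sub>R pd1 f q + snd (pd2 (pd2 G) s) *\<^sub>R pd2 f q
      + (B1 * B1) *\<^sub>R pd1 (pd1 f) q + (B1 * B2 + B2 * B1) *\<^sub>R pd2 (pd1 f) q + (B2 * B2) *\<^sub>R pd2 (pd2 f) q"
proof -
  note f1 = Ck_on_2D[OF f] and G1 = Ck_on_2D[OF G]
  have q: "q \<in> U"
    using GW s q_def by blast
  have first: "pd1 (\<lambda>x. f (G x)) x = fst (pd1 G x) *\<^sub>R pd1 f (G x) + snd (pd1 G x) *\<^sub>R pd2 f (G x)"
    "pd2 (\<lambda>x. f (G x)) x = fst (pd2 G x) *\<^sub>R pd1 f (G x) + snd (pd2 G x) *\<^sub>R pd2 f (G x)"
    if "x \<in> W" for x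
    using has_partials_pd[OF has_partials_compose[OF Ck_on_imp_has_partials[OF W G1(1) that]
        Ck_on_imp_has_partials[OF U f1(1)]]] that GW by auto
  have coeff: "has_partials (\<lambda>x. fst (pd1 G x)) (fst (pd1 (pd1 G) s)) (fst (pd2 (pd1 G) s)) s"
    "has_partials (\<lambda>x. snd (pd1 G x)) (snd (pd1 (pd1 G) s)) (snd (pd2 (pd1 G) s)) s"
    "has_partials (\<lambda>x. fst (pd2 G x)) (fst (pd1 (pd2 G) s)) (fst (pd2 (pd2 G) s)) s"
    "has_partials (\<lambda>x. snd (pd2 G x)) (snd (pd1 (pd2 G) s)) (snd (pd2 (pd2 G) s)) s"
    using has_partials_linear[OF bounded_linear_fst Ck_on_imp_has_partials[OF W G1(2) s]]
      has_partials_linear[OF bounded_linear_snd Ck_on_imp_has_partials[OF W G1(2) s]]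
      has_partials_linear[OF bounded_linear_fst Ck_on_imp_has_partials[OF W G1(3) s]]
      has_partials_linear[OF bounded_linear_snd Ck_on_imp_has_partials[OF W G1(3) s]]
    by blast+
  have hG: "has_partials G (pd1 G s) (pd2 G s) s"
    by (rule Ck_on_imp_has_partials[OF W G1(1) s])
  have hf: "has_partials (\<lambda>x. pd1 f (G x))
      (A1 *\<^sub>R pd1 (pd1 f) q + A2 *\<^sub>R pd2 (pd1 f) q) (B1 *\<^sub>R pd1 (pd1 f) q + B2 *\<^sub>R pd2 (pd1 f) q) s"
    "has_partials (\<lambda>x. pd2 f (G x))
      (A1 *\<^sub>R pd1 (pd2 f) q + A2 *\<^sub>R pd2 (pd2 f) q) (B1 *\<^sub>R pd1 (pd2 f) q + B2 *\<^sub>R pd2 (pd2 f) q) s"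
    using has_partials_compose[OF hG Ck_on_imp_has_partials[OF U f1(2) q, unfolded q_def]]
      has_partials_compose[OF hG Ck_on_imp_has_partials[OF U f1(3) q, unfolded q_def]]
    by (simp_all add: A1_def A2_def B1_def B2_def q_def)
  have "pd1 (pd1 (\<lambda>x. f (G x))) s = pd1 (\<lambda>x. fst (pd1 G x) *\<^sub>R pd1 f (G x) + snd (pd1 G x) *\<^sub>R pd2 f (G x)) s"
    "pd2 (pd1 (\<lambda>x. f (G x))) s = pd2 (\<lambda>x. fst (pd1 G x) *\<^sub>R pd1 f (G x) + snd (pd1 G x) *\<^sub>R pd2 f (G x)) s"
    "pd2 (pd2 (\<lambda>x. f (G x))) s = pd2 (\<lambda>x. fst (pd2 G x) *\<^sub>R pd1 f (G x) + snd (pd2 G x) *\<^sub>R pd2 f (G x)) s"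
    by (rule pd_cong_open[OF W s], simp add: first)+
  moreover note has_partials_pd[OF has_partials_add[OF has_partials_scaleR[OF coeff(1) hf(1)]
      has_partials_scaleR[OF coeff(2) hf(2)]]]
    has_partials_pd[OF has_partials_add[OF has_partials_scaleR[OF coeff(3) hf(1)]
      has_partials_scaleR[OF coeff(4) hf(2)]]]
  moreover have "pd1 (pd2 f) q = pd2 (pd1 f) q"
    by (rule pd_commute[OF U f q])
  ultimately show "pd1 (pd1 (\<lambda>x. f (G x))) s =
      fst (pd1 (pd1 G) s) *\<^sub>R pd1 f q + snd (pd1 (pd1 G) s) *\<^sub>R pd2 f q
      + (A1 * A1) *\<^sub>R pd1 (pd1 f) q + (A1 * A2 + A2 * A1) *\<^sub>R pd2 (pd1 f) q + (A2 * A2) *\<^sub>R pd2 (pd2 f) q"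
    "pd2 (pd1 (\<lambda>x. f (G x))) s =
      fst (pd2 (pd1 G) s) *\<^sub>R pd1 f q + snd (pd2 (pd1 G) s) *\<^sub>R pd2 f q
      + (A1 * B1) *\<^sub>R pd1 (pd1 f) q + (A1 * B2 + A2 * B1) *\<^sub>R pd2 (pd1 f) q + (A2 * B2) *\<^sub>R pd2 (pd2 f) q"
    "pd2 (pd2 (\<lambda>x. f (G x))) s =
      fst (pd2 (pd2 G) s) *\<^sub>R pd1 f q + snd (pd2 (pd2 G) s) *\<^sub>R pd2 f q
      + (B1 * B1) *\<^sub>R pd1 (pd1 f) q + (B1 * B2 + B2 * B1) *\<^sub>R pd2 (pd1 f) q + (B2 * B2) *\<^sub>R pd2 (pd2 f) q"
    unfolding scaleR_add_left by (simp_all add: A1_def A2_def B1_def B2_def q_def algebra_simps)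
qed

section \<open>Inverse function theorem for \<open>C\<^sup>k\<close> maps of the plane\<close>

definition det2 :: "real \<times> real \<Rightarrow> real \<times> real \<Rightarrow> real"
  where "det2 a b = fst a * snd b - snd a * fst b"

definition cramer :: "real \<times> real \<Rightarrow> real \<times> real \<Rightarrow> real \<times> real \<Rightarrow> real \<times> real"
  where "cramer A B e = (det2 e B / det2 A B, det2 A e / det2 A B)"

lemma cramer_unique:
  assumes "a *\<^sub>R A + b *\<^sub>R B = e" "det2 A B \<noteq> 0"
  shows "(a, b) = cramer A B e"
proof -
  have "det2 e B = a * det2 A B" "det2 A e = b * det2 A B"
    unfolding assms(1)[symmetric] det2_def by (simp_all add: algebra_simps)
  then show ?thesis
    using assms(2) by (simp add: cramer_def)
qed

lemma bounded_linear_cramer: "bounded_linear (cramer A B)"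
  unfolding cramer_def det2_def
  by (intro linear_conv_bounded_linear[THEN iffD1] linearI)
     (auto simp: algebra_simps add_divide_distrib diff_divide_distrib)

lemma Ck_on_cramer:
  assumes "open U" "Ck_on n U A" "Ck_on n U B" "\<forall>x\<in>U. det2 (A x) (B x) \<noteq> 0"
  shows "Ck_on n U (\<lambda>x. cramer (A x) (B x) e)"
  unfolding cramer_def det2_def using assms
  by (intro Ck_on_Pair Ck_on_divide Ck_on_diff Ck_on_mult Ck_on_fst Ck_on_snd Ck_on_const)
     (simp_all add: det2_def)

lemma C1_local_inverse:
  fixes h :: "real \<times> real \<Rightarrow> real \<times> real"
  assumes U: "open U" and C1: "Ck_on 1 U h" and p: "p \<in> U"
    and J: "det2 (pd1 h p) (pd2 h p) \<noteq> 0"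
  obtains V W G where "open V" "p \<in> V" "V \<subseteq> U" "open W"
    "\<forall>q\<in>V. h q \<in> W \<and> G (h q) = q" "\<forall>s\<in>W. G s \<in> V \<and> h (G s) = s"
    "\<forall>q\<in>V. det2 (pd1 h q) (pd2 h q) \<noteq> 0" "continuous_on W G" "\<forall>s\<in>W. G differentiable (at s)"
proof -
  define U0 where "U0 = (\<lambda>q. det2 (pd1 h q) (pd2 h q)) -` (- {0}) \<inter> U"
  have cont: "continuous_on U (pd1 h)" "continuous_on U (pd2 h)"
    using C1 by (simp_all add: Ck_on_imp_continuous_on)
  have "continuous_on U (\<lambda>q. det2 (pd1 h q) (pd2 h q))"
    unfolding det2_def by (intro continuous_intros cont)
  then have U0: "open U0"
    unfolding U0_def
    by (rule continuous_on_open_vimage[OF U, THEN iffD1, rule_format, OF _ open_Compl[OF closed_singleton]])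
  define h' where "h' q = Blinfun (\<lambda>v. fst v *\<^sub>R pd1 h q + snd v *\<^sub>R pd2 h q)" for q
  have h': "blinfun_apply (h' q) = (\<lambda>v. fst v *\<^sub>R pd1 h q + snd v *\<^sub>R pd2 h q)" for q
    unfolding h'_def by (intro bounded_linear_Blinfun_apply bounded_linear_intros)
  have "(h has_derivative blinfun_apply (h' q)) (at q)" if "q \<in> U0" for q
    using Ck_on_imp_has_partials[of U 0 h q] U C1 that
    by (simp add: U0_def h' has_partials_def)
  moreover have "continuous_on U0 h'"
  proof (rule continuous_on_blinfun_componentwise)
    have "continuous_on U0 (pd1 h)" "continuous_on U0 (pd2 h)"
      using continuous_on_subset[OF cont(1), of U0] continuous_on_subset[OF cont(2), of U0]
      by (auto simp: U0_def)
    then show "continuous_on U0 (\<lambda>q. blinfun_apply (h' q) i)" for i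
      unfolding h' by (intro continuous_intros)
  qed
  moreover have "p \<in> U0"
    using p J by (simp add: U0_def)
  moreover have "Blinfun (cramer (pd1 h p) (pd2 h p)) o\<^sub>L h' p = id_blinfun"
    using cramer_unique[OF refl J, symmetric]
    by (intro blinfun_eqI) (simp add: bounded_linear_Blinfun_apply[OF bounded_linear_cramer] h')
  ultimately obtain V W G G' where V: "open V" "V \<subseteq> U0" "p \<in> V" and W: "open W"
    and hom: "homeomorphism V W h G" and G': "\<And>s. s \<in> W \<Longrightarrow> (G has_derivative G' s) (at s)"
    using inverse_function_theorem[OF U0] by metis
  show ?thesis
  proof (rule that[OF V(1,3) _ W])
    show "V \<subseteq> U" "\<forall>q\<in>V. det2 (pd1 h q) (pd2 h q) \<noteq> 0"
      using V(2) by (auto simp: U0_def)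
    show "\<forall>q\<in>V. h q \<in> W \<and> G (h q) = q" "\<forall>s\<in>W. G s \<in> V \<and> h (G s) = s" "continuous_on W G"
      using hom unfolding homeomorphism_def by auto
    show "\<forall>s\<in>W. G differentiable (at s)"
      using G' unfolding differentiable_def by blast
  qed
qed

lemma has_partials_right_inverse:
  fixes h G :: "real \<times> real \<Rightarrow> real \<times> real"
  assumes W: "open W" and s: "s \<in> W" and inv: "\<forall>x\<in>W. h (G x) = x"
    and G: "G differentiable (at s)" and h: "h differentiable (at (G s))"
    and J: "det2 (pd1 h (G s)) (pd2 h (G s)) \<noteq> 0"
  shows "has_partials G (cramer (pd1 h (G s)) (pd2 h (G s)) (1, 0))
    (cramer (pd1 h (G s)) (pd2 h (G s)) (0, 1)) s"
proof -
  have chain: "has_partials (\<lambda>x. h (G x))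
      (fst (pd1 G s) *\<^sub>R pd1 h (G s) + snd (pd1 G s) *\<^sub>R pd2 h (G s))
      (fst (pd2 G s) *\<^sub>R pd1 h (G s) + snd (pd2 G s) *\<^sub>R pd2 h (G s)) s"
    using has_partials_compose[OF differentiable_imp_has_partials[OF G] differentiable_imp_has_partials[OF h]] .
  have "pd1 (\<lambda>x. h (G x)) s = (1, 0)" "pd2 (\<lambda>x. h (G x)) s = (0, 1)"
    using pd_cong_open[OF W s, of "\<lambda>x. h (G x)" "\<lambda>x. x"] inv has_partials_pd[OF has_partials_ident]
    by auto
  then have "fst (pd1 G s) *\<^sub>R pd1 h (G s) + snd (pd1 G s) *\<^sub>R pd2 h (G s) = (1, 0)"
    "fst (pd2 G s) *\<^sub>R pd1 h (G s) + snd (pd2 G s) *\<^sub>R pd2 h (G s) = (0, 1)"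
    using has_partials_pd[OF chain] by simp_all
  then have "pd1 G s = cramer (pd1 h (G s)) (pd2 h (G s)) (1, 0)"
    "pd2 G s = cramer (pd1 h (G s)) (pd2 h (G s)) (0, 1)"
    using cramer_unique[OF _ J, of "fst (pd1 G s)" "snd (pd1 G s)"]
      cramer_unique[OF _ J, of "fst (pd2 G s)" "snd (pd2 G s)"] by simp_all
  then show ?thesis
    using differentiable_imp_has_partials[OF G] by simp
qed

lemma smooth_local_inverse:
  fixes h :: "real \<times> real \<Rightarrow> real \<times> real"
  assumes U: "open U" and smooth: "\<forall>k. Ck_on k U h" and p: "p \<in> U"
    and J: "det2 (pd1 h p) (pd2 h p) \<noteq> 0"
  obtains V W G where "open V" "p \<in> V" "V \<subseteq> U" "open W"
    "\<forall>q\<in>V. h q \<in> W \<and> G (h q) = q" "\<forall>s\<in>W. G s \<in> V \<and> h (G s) = s" "\<forall>k. Ck_on k W G"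
proof -
  obtain V W G where V: "open V" "p \<in> V" "V \<subseteq> U" and W: "open W"
    and inv: "\<forall>q\<in>V. h q \<in> W \<and> G (h q) = q" "\<forall>s\<in>W. G s \<in> V \<and> h (G s) = s"
    and JV: "\<forall>q\<in>V. det2 (pd1 h q) (pd2 h q) \<noteq> 0"
    and G: "continuous_on W G" "\<forall>s\<in>W. G differentiable (at s)"
    using C1_local_inverse[OF U smooth[rule_format, of 1] p J] by blast
  have GV: "G ` W \<subseteq> V"
    using inv(2) by blast
  have h: "h differentiable (at q)" if "q \<in> U" for q
    using smooth[rule_format, of 1] U that by (simp add: differentiable_on_eq_differentiable_at)
  have partials: "has_partials G (cramer (pd1 h (G s)) (pd2 h (G s)) (1, 0))
      (cramer (pd1 h (G s)) (pd2 h (G s)) (0, 1)) s" if "s \<in> W" for s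
    using that GV V(3) inv(2) G(2) JV
    by (intro has_partials_right_inverse[OF W that] h) auto
  have cramer: "Ck_on k V (\<lambda>q. cramer (pd1 h q) (pd2 h q) e)" for k e
  proof (rule Ck_on_cramer[OF V(1) _ _ JV])
    show "Ck_on k V (pd1 h)" "Ck_on k V (pd2 h)"
      using smooth[rule_format, of "Suc k"] by (simp_all add: Ck_on_subset[OF V(3)])
  qed
  have "Ck_on k W G" for k
  proof (induction k)
    case 0
    then show ?case using G(1) by simp
  next
    case (Suc k)
    show ?case
      by (rule Ck_on_SucI[OF W partials Ck_on_compose[OF W V(1) cramer Suc GV]
            Ck_on_compose[OF W V(1) cramer Suc GV]])
  qed
  then show ?thesis
    using that[OF V W inv] by blast
qed

section \<open>The numerator of the mean curvature\<close>

lemma lip_commute: "lip a b = lip b a"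
  by (simp add: lip_def algebra_simps)

lemma lip_add_left: "lip (a + b) c = lip a c + lip b c"
  and lip_add_right: "lip a (b + c) = lip a b + lip a c"
  and lip_scaleR_left: "lip (x *\<^sub>R a) c = x * lip a c"
  and lip_scaleR_right: "lip a (x *\<^sub>R c) = x * lip a c"
  by (simp_all add: lip_def algebra_simps)

lemma lcross_eq:
  "lcross a b =
     (fst (snd a) * snd (snd b) - snd (snd a) * fst (snd b),
      snd (snd a) * fst b - fst a * snd (snd b),
      -(fst a * fst (snd b) - fst (snd a) * fst b))"
  by (simp add: lcross_def split: prod.splits)

lemma lip_lcross_left: "lip (lcross a b) a = 0"
  and lip_lcross_right: "lip (lcross a b) b = 0"
  by (simp_all add: lcross_eq lip_def algebra_simps)

lemma lcross_lincomb:
  "lcross (A1 *\<^sub>R f1 + A2 *\<^sub>R f2) (B1 *\<^sub>R f1 + B2 *\<^sub>R f2) = det2 (A1, A2) (B1, B2) *\<^sub>R lcross f1 f2"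
  by (simp add: lcross_eq det2_def algebra_simps)

lemma lip_lcross_self: "lip (lcross a b) (lcross a b) = (lip a b)\<^sup>2 - lip a a * lip b b"
  by (simp add: lcross_eq lip_def power2_eq_square algebra_simps)

text \<open>For \<open>a, b, u, v, w = f\<^sub>u, f\<^sub>v, f\<^sub>u\<^sub>u, f\<^sub>u\<^sub>v, f\<^sub>v\<^sub>v\<close> this is \<open>E N - 2 F M + G L\<close>, computed with
  the unnormalised normal \<open>a \<times> b\<close> in place of the unit normal.\<close>
definition mc_form :: "real \<times> real \<times> real \<Rightarrow> real \<times> real \<times> real \<Rightarrow> real \<times> real \<times> real \<Rightarrow>
    real \<times> real \<times> real \<Rightarrow> real \<times> real \<times> real \<Rightarrow> real" where
  "mc_form a b u v w =
     lip a a * lip (lcross a b) w - 2 * lip a b * lip (lcross a b) v + lip b b * lip (lcross a b) u"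

definition mc_numerator :: "(real \<times> real \<Rightarrow> real \<times> real \<times> real) \<Rightarrow> real \<times> real \<Rightarrow> real" where
  "mc_numerator f s = mc_form (pd1 f s) (pd2 f s) (pd1 (pd1 f) s) (pd2 (pd1 f) s) (pd2 (pd2 f) s)"

lemma mean_curvature_eq_0_iff:
  assumes "regular_timelike_at f q"
  shows "mean_curvature f q = 0 \<longleftrightarrow> mc_numerator f q = 0"
proof -
  define a where "a = pd1 f q"
  define b where "b = pd2 f q"
  define D where "D = lip a a * lip b b - (lip a b)\<^sup>2"
  have "D < 0"
    using assms by (simp add: regular_timelike_at_def D_def fE_def fF_def fG_def a_def b_def)
  define c where "c = 1 / sqrt \<bar>lip (lcross a b) (lcross a b)\<bar>"
  have "c > 0"
    using \<open>D < 0\<close> lip_lcross_self[of a b] by (simp add: c_def D_def)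
  have "unit_normal f q = c *\<^sub>R lcross a b"
    by (simp add: unit_normal_def c_def a_def b_def Let_def)
  then have "mean_curvature f q = c * mc_numerator f q / (2 * D)"
    unfolding mean_curvature_def sL_def sM_def sN_def fE_def fF_def fG_def mc_numerator_def mc_form_def
      a_def[symmetric] b_def[symmetric] D_def[symmetric]
    by (simp add: lip_scaleR_right lip_commute[of _ "lcross a b"] algebra_simps)
  then show ?thesis
    using \<open>c > 0\<close> \<open>D < 0\<close> by simp
qed

lemma mc_numerator_cong:
  assumes W: "open W" and s: "s \<in> W" and eq: "\<And>x. x \<in> W \<Longrightarrow> F x = \<Gamma> x"
  shows "mc_numerator F s = mc_numerator \<Gamma> s"
proof -
  have first: "pd1 F x = pd1 \<Gamma> x" "pd2 F x = pd2 \<Gamma> x" if "x \<in> W" for x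
    using pd_cong_open[OF W that, of F \<Gamma>] eq by blast+
  have "pd1 (pd1 F) s = pd1 (pd1 \<Gamma>) s" "pd2 (pd1 F) s = pd2 (pd1 \<Gamma>) s" "pd2 (pd2 F) s = pd2 (pd2 \<Gamma>) s"
    using pd_cong_open[OF W s, of "pd1 F" "pd1 \<Gamma>"] pd_cong_open[OF W s, of "pd2 F" "pd2 \<Gamma>"] first
    by blast+
  then show ?thesis
    using first[OF s] by (simp add: mc_numerator_def)
qed

text \<open>The first-order parts \<open>c\<^sub>i f\<^sub>i\<close>, \<open>d\<^sub>i f\<^sub>i\<close>, \<open>e\<^sub>i f\<^sub>i\<close> of the second derivatives are tangent
  and drop out against the normal.\<close>
lemma mc_form_lincomb:
  "mc_form (A1 *\<^sub>R f1 + A2 *\<^sub>R f2) (B1 *\<^sub>R f1 + B2 *\<^sub>R f2)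
     (c1 *\<^sub>R f1 + c2 *\<^sub>R f2 + (A1 * A1) *\<^sub>R f11 + (A1 * A2 + A2 * A1) *\<^sub>R f12 + (A2 * A2) *\<^sub>R f22)
     (d1 *\<^sub>R f1 + d2 *\<^sub>R f2 + (A1 * B1) *\<^sub>R f11 + (A1 * B2 + A2 * B1) *\<^sub>R f12 + (A2 * B2) *\<^sub>R f22)
     (e1 *\<^sub>R f1 + e2 *\<^sub>R f2 + (B1 * B1) *\<^sub>R f11 + (B1 * B2 + B2 * B1) *\<^sub>R f12 + (B2 * B2) *\<^sub>R f22)
   = det2 (A1, A2) (B1, B2) ^ 3 * mc_form f1 f2 f11 f12 f22"
proof -
  define J where "J = det2 (A1, A2) (B1, B2)"
  define n where "n = lcross f1 f2"
  note lip_lin = lip_add_left lip_add_right lip_scaleR_left lip_scaleR_right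
  have n: "lip n f1 = 0" "lip n f2 = 0"
    unfolding n_def by (simp_all add: lip_lcross_left lip_lcross_right)
  have cross: "lcross (A1 *\<^sub>R f1 + A2 *\<^sub>R f2) (B1 *\<^sub>R f1 + B2 *\<^sub>R f2) = J *\<^sub>R n"
    unfolding J_def n_def by (rule lcross_lincomb)
  have tangent: "lip (A1 *\<^sub>R f1 + A2 *\<^sub>R f2) (A1 *\<^sub>R f1 + A2 *\<^sub>R f2)
      = A1 * A1 * lip f1 f1 + 2 * A1 * A2 * lip f1 f2 + A2 * A2 * lip f2 f2"
    "lip (A1 *\<^sub>R f1 + A2 *\<^sub>R f2) (B1 *\<^sub>R f1 + B2 *\<^sub>R f2)
      = A1 * B1 * lip f1 f1 + (A1 * B2 + A2 * B1) * lip f1 f2 + A2 * B2 * lip f2 f2"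
    "lip (B1 *\<^sub>R f1 + B2 *\<^sub>R f2) (B1 *\<^sub>R f1 + B2 *\<^sub>R f2)
      = B1 * B1 * lip f1 f1 + 2 * B1 * B2 * lip f1 f2 + B2 * B2 * lip f2 f2"
    by (simp_all add: lip_lin lip_commute[of f2 f1] algebra_simps)
  have normal: "lip (J *\<^sub>R n) (c1 *\<^sub>R f1 + c2 *\<^sub>R f2 + (A1 * A1) *\<^sub>R f11 + (A1 * A2 + A2 * A1) *\<^sub>R f12 + (A2 * A2) *\<^sub>R f22)
      = J * (A1 * A1 * lip n f11 + (A1 * A2 + A2 * A1) * lip n f12 + A2 * A2 * lip n f22)"
    "lip (J *\<^sub>R n) (d1 *\<^sub>R f1 + d2 *\<^sub>R f2 + (A1 * B1) *\<^sub>R f11 + (A1 * B2 + A2 * B1) *\<^sub>R f12 + (A2 * B2) *\<^sub>R f22)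
      = J * (A1 * B1 * lip n f11 + (A1 * B2 + A2 * B1) * lip n f12 + A2 * B2 * lip n f22)"
    "lip (J *\<^sub>R n) (e1 *\<^sub>R f1 + e2 *\<^sub>R f2 + (B1 * B1) *\<^sub>R f11 + (B1 * B2 + B2 * B1) *\<^sub>R f12 + (B2 * B2) *\<^sub>R f22)
      = J * (B1 * B1 * lip n f11 + (B1 * B2 + B2 * B1) * lip n f12 + B2 * B2 * lip n f22)"
    by (simp_all add: lip_lin n algebra_simps)
  show ?thesis
    unfolding mc_form_def cross tangent normal J_def[symmetric] n_def[symmetric]
    unfolding J_def det2_def fst_conv snd_conv by algebra
qed

lemma mc_numerator_compose:
  fixes f :: "real \<times> real \<Rightarrow> real \<times> real \<times> real" and G :: "real \<times> real \<Rightarrow> real \<times> real"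
  assumes U: "open U" and W: "open W" and f: "Ck_on 2 U f" and G: "Ck_on 2 W G"
    and GW: "G ` W \<subseteq> U" and s: "s \<in> W"
  shows "mc_numerator (\<lambda>x. f (G x)) s = det2 (pd1 G s) (pd2 G s) ^ 3 * mc_numerator f (G s)"
proof -
  have "pd1 (\<lambda>x. f (G x)) s = fst (pd1 G s) *\<^sub>R pd1 f (G s) + snd (pd1 G s) *\<^sub>R pd2 f (G s)"
    "pd2 (\<lambda>x. f (G x)) s = fst (pd2 G s) *\<^sub>R pd1 f (G s) + snd (pd2 G s) *\<^sub>R pd2 f (G s)"
    using has_partials_pd[OF has_partials_compose[OF Ck_on_imp_has_partials[OF W Ck_on_2D(1)[OF G] s]
        Ck_on_imp_has_partials[OF U Ck_on_2D(1)[OF f]]]] s GW by auto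
  moreover have "det2 (pd1 G s) (pd2 G s) = det2 (fst (pd1 G s), snd (pd1 G s)) (fst (pd2 G s), snd (pd2 G s))"
    by simp
  ultimately show ?thesis
    unfolding mc_numerator_def second_partials_compose[OF assms] by (simp only: mc_form_lincomb)
qed

lemma mc_numerator_graph_xz:
  assumes W: "open W" and \<psi>: "Ck_on 2 W \<psi>" and s: "s \<in> W"
  shows "mc_numerator (\<lambda>x. (fst x, \<psi> x, snd x)) s =
    (1 - (pd2 \<psi> s)\<^sup>2) * pd1 (pd1 \<psi>) s + 2 * pd1 \<psi> s * pd2 \<psi> s * pd2 (pd1 \<psi>) s
      - (1 + (pd1 \<psi> s)\<^sup>2) * pd2 (pd2 \<psi>) s"
proof -
  define \<Gamma> where "\<Gamma> = (\<lambda>x. (fst x, \<psi> x, snd x))"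
  note \<psi>1 = Ck_on_2D[OF \<psi>]
  have first: "pd1 \<Gamma> x = (1, pd1 \<psi> x, 0)" "pd2 \<Gamma> x = (0, pd2 \<psi> x, 1)" if "x \<in> W" for x
    using has_partials_pd[OF has_partials_Pair[OF has_partials_fst
          has_partials_Pair[OF Ck_on_imp_has_partials[OF W \<psi>1(1) that] has_partials_snd]]]
    unfolding \<Gamma>_def by simp_all
  have "pd1 (pd1 \<Gamma>) s = pd1 (\<lambda>x. (1::real, pd1 \<psi> x, 0::real)) s"
    "pd2 (pd1 \<Gamma>) s = pd2 (\<lambda>x. (1::real, pd1 \<psi> x, 0::real)) s"
    "pd2 (pd2 \<Gamma>) s = pd2 (\<lambda>x. (0::real, pd2 \<psi> x, 1::real)) s"
    by (rule pd_cong_open[OF W s], simp add: first)+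
  then have second: "pd1 (pd1 \<Gamma>) s = (0, pd1 (pd1 \<psi>) s, 0)"
    "pd2 (pd1 \<Gamma>) s = (0, pd2 (pd1 \<psi>) s, 0)" "pd2 (pd2 \<Gamma>) s = (0, pd2 (pd2 \<psi>) s, 0)"
    using has_partials_pd[OF has_partials_Pair[OF has_partials_const
        has_partials_Pair[OF Ck_on_imp_has_partials[OF W \<psi>1(2) s] has_partials_const]]]
      has_partials_pd[OF has_partials_Pair[OF has_partials_const
        has_partials_Pair[OF Ck_on_imp_has_partials[OF W \<psi>1(3) s] has_partials_const]]]
    by simp_all
  show ?thesis
    unfolding \<Gamma>_def[symmetric] mc_numerator_def first[OF s] second
    by (simp add: mc_form_def lcross_eq lip_def power2_eq_square algebra_simps)
qed

lemma mc_numerator_graph_yz: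
  assumes W: "open W" and \<psi>: "Ck_on 2 W \<psi>" and s: "s \<in> W"
  shows "mc_numerator (\<lambda>x. (\<psi> x, fst x, snd x)) s =
    - ((1 - (pd2 \<psi> s)\<^sup>2) * pd1 (pd1 \<psi>) s + 2 * pd1 \<psi> s * pd2 \<psi> s * pd2 (pd1 \<psi>) s
      - (1 + (pd1 \<psi> s)\<^sup>2) * pd2 (pd2 \<psi>) s)"
proof -
  define \<Gamma> where "\<Gamma> = (\<lambda>x. (\<psi> x, fst x, snd x))"
  note \<psi>1 = Ck_on_2D[OF \<psi>]
  have first: "pd1 \<Gamma> x = (pd1 \<psi> x, 1, 0)" "pd2 \<Gamma> x = (pd2 \<psi> x, 0, 1)" if "x \<in> W" for x
    using has_partials_pd[OF has_partials_Pair[OF Ck_on_imp_has_partials[OF W \<psi>1(1) that]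
          has_partials_Pair[OF has_partials_fst has_partials_snd]]]
    unfolding \<Gamma>_def by simp_all
  have "pd1 (pd1 \<Gamma>) s = pd1 (\<lambda>x. (pd1 \<psi> x, 1::real, 0::real)) s"
    "pd2 (pd1 \<Gamma>) s = pd2 (\<lambda>x. (pd1 \<psi> x, 1::real, 0::real)) s"
    "pd2 (pd2 \<Gamma>) s = pd2 (\<lambda>x. (pd2 \<psi> x, 0::real, 1::real)) s"
    by (rule pd_cong_open[OF W s], simp add: first)+
  then have second: "pd1 (pd1 \<Gamma>) s = (pd1 (pd1 \<psi>) s, 0, 0)"
    "pd2 (pd1 \<Gamma>) s = (pd2 (pd1 \<psi>) s, 0, 0)" "pd2 (pd2 \<Gamma>) s = (pd2 (pd2 \<psi>) s, 0, 0)"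
    using has_partials_pd[OF has_partials_Pair[OF Ck_on_imp_has_partials[OF W \<psi>1(2) s]
          has_partials_const[of "(1, 0)"]]]
      has_partials_pd[OF has_partials_Pair[OF Ck_on_imp_has_partials[OF W \<psi>1(3) s]
          has_partials_const[of "(0, 1)"]]]
    by (simp_all add: zero_prod_def)
  show ?thesis
    unfolding \<Gamma>_def[symmetric] mc_numerator_def first[OF s] second
    by (simp add: mc_form_def lcross_eq lip_def power2_eq_square algebra_simps)
qed

section \<open>Minimal surfaces as local graphs\<close>

lemma image_reparametrization:
  assumes "\<forall>q\<in>V. h q \<in> W \<and> G (h q) = q" "G ` W \<subseteq> V"
  shows "f ` V = (\<lambda>s. f (G s)) ` W"
  using assms by (force intro: rev_image_eqI)

lemma local_graph:
  fixes f :: "real \<times> real \<Rightarrow> real \<times> real \<times> real" and P :: "real \<times> real \<times> real \<Rightarrow> real \<times> real"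
    and Q :: "real \<times> real \<times> real \<Rightarrow> real"
  assumes U: "open U" and smooth: "\<forall>k. Ck_on k U f" and minimal: "\<forall>q\<in>U. mc_numerator f q = 0"
    and p: "p \<in> U" and P: "bounded_linear P" and Q: "bounded_linear Q"
    and reassemble: "\<And>v. \<iota> (Q v) (P v) = v"
    and J: "det2 (P (pd1 f p)) (P (pd2 f p)) \<noteq> 0"
  obtains V W \<psi> where "open V" "p \<in> V" "V \<subseteq> U" "open W" "\<forall>k. Ck_on k W \<psi>"
    "f ` V = (\<lambda>s. \<iota> (\<psi> s) s) ` W" "\<forall>s\<in>W. mc_numerator (\<lambda>s. \<iota> (\<psi> s) s) s = 0"
proof -
  have "f differentiable (at p)"
    using smooth[rule_format, of 1] U p by (simp add: differentiable_on_eq_differentiable_at)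
  then have "det2 (pd1 (\<lambda>q. P (f q)) p) (pd2 (\<lambda>q. P (f q)) p) \<noteq> 0"
    using J by (simp add: pd_linear[OF P])
  moreover have "\<forall>k. Ck_on k U (\<lambda>q. P (f q))"
    using Ck_on_linear[OF U P] smooth by blast
  ultimately obtain V W G where V: "open V" "p \<in> V" "V \<subseteq> U" and W: "open W"
    and inv: "\<forall>q\<in>V. P (f q) \<in> W \<and> G (P (f q)) = q" "\<forall>s\<in>W. G s \<in> V \<and> P (f (G s)) = s"
    and G: "\<forall>k. Ck_on k W G"
    using smooth_local_inverse[OF U _ p] by blast
  have GV: "G ` W \<subseteq> V"
    using inv(2) by blast
  have fV: "Ck_on k V f" for k
    using smooth Ck_on_subset[OF V(3)] by blast
  have fG: "Ck_on k W (\<lambda>s. f (G s))" for k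
    using Ck_on_compose[OF W V(1) fV G[rule_format] GV] .
  define \<psi> where "\<psi> s = Q (f (G s))" for s
  have graph: "f (G s) = \<iota> (\<psi> s) s" if "s \<in> W" for s
    using reassemble[of "f (G s)"] inv(2) that by (simp add: \<psi>_def)
  show ?thesis
  proof (rule that[OF V W])
    show "\<forall>k. Ck_on k W \<psi>"
      unfolding \<psi>_def using Ck_on_linear[OF W Q fG] by blast
    have "f ` V = (\<lambda>s. f (G s)) ` W"
      using inv(1) GV by (rule image_reparametrization)
    also have "\<dots> = (\<lambda>s. \<iota> (\<psi> s) s) ` W"
      by (rule image_cong) (simp_all add: graph)
    finally show "f ` V = (\<lambda>s. \<iota> (\<psi> s) s) ` W" .
    show "\<forall>s\<in>W. mc_numerator (\<lambda>s. \<iota> (\<psi> s) s) s = 0"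
    proof
      fix s assume s: "s \<in> W"
      have "mc_numerator (\<lambda>s. \<iota> (\<psi> s) s) s = mc_numerator (\<lambda>s. f (G s)) s"
        by (rule mc_numerator_cong[OF W s]) (simp add: graph)
      also have "\<dots> = det2 (pd1 G s) (pd2 G s) ^ 3 * mc_numerator f (G s)"
        by (rule mc_numerator_compose[OF V(1) W fV G[rule_format] GV s])
      also have "\<dots> = 0"
        using minimal V(3) GV s by auto
      finally show "mc_numerator (\<lambda>s. \<iota> (\<psi> s) s) s = 0" .
    qed
  qed
qed

lemma graph_over_yz_plane:
  assumes U: "open U" and smooth: "\<forall>k. Ck_on k U f" and minimal: "\<forall>q\<in>U. mc_numerator f q = 0"
    and p: "p \<in> U" and n: "fst (lcross (pd1 f p) (pd2 f p)) \<noteq> 0"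
  shows "\<exists>V W \<psi>. open V \<and> p \<in> V \<and> V \<subseteq> U \<and> open W \<and> smooth_on W \<psi> \<and> born_infeld W \<psi> \<and>
           f ` V = {(\<psi> (y, z), y, z) | y z. (y, z) \<in> W}"
proof -
  have P: "bounded_linear (\<lambda>v::real \<times> real \<times> real. (fst (snd v), snd (snd v)))"
    and Q: "bounded_linear (\<lambda>v::real \<times> real \<times> real. fst v)"
    by (intro bounded_linear_intros)+
  have J: "det2 (fst (snd (pd1 f p)), snd (snd (pd1 f p))) (fst (snd (pd2 f p)), snd (snd (pd2 f p))) \<noteq> 0"
    using n by (simp add: lcross_eq det2_def)
  obtain V W \<psi> where VW: "open V" "p \<in> V" "V \<subseteq> U" "open W" and \<psi>: "\<forall>k. Ck_on k W \<psi>"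
    and image: "f ` V = (\<lambda>s. (\<psi> s, fst s, snd s)) ` W"
    and graph_minimal: "\<forall>s\<in>W. mc_numerator (\<lambda>s. (\<psi> s, fst s, snd s)) s = 0"
    by (rule local_graph[OF U smooth minimal p P Q _ J, where \<iota>="\<lambda>t s. (t, fst s, snd s)"]) simp_all
  have "born_infeld W \<psi>"
    using graph_minimal mc_numerator_graph_yz[OF VW(4) \<psi>[rule_format]] by (simp add: born_infeld_def)
  moreover have "f ` V = {(\<psi> (y, z), y, z) | y z. (y, z) \<in> W}"
    unfolding image by auto
  ultimately show ?thesis
    using VW \<psi> by (auto simp: smooth_on_def)
qed

lemma graph_over_xz_plane:
  assumes U: "open U" and smooth: "\<forall>k. Ck_on k U f" and minimal: "\<forall>q\<in>U. mc_numerator f q = 0"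
    and p: "p \<in> U" and n: "fst (snd (lcross (pd1 f p) (pd2 f p))) \<noteq> 0"
  shows "\<exists>V W \<psi>. open V \<and> p \<in> V \<and> V \<subseteq> U \<and> open W \<and> smooth_on W \<psi> \<and> born_infeld W \<psi> \<and>
           f ` V = {(x, \<psi> (x, z), z) | x z. (x, z) \<in> W}"
proof -
  have P: "bounded_linear (\<lambda>v::real \<times> real \<times> real. (fst v, snd (snd v)))"
    and Q: "bounded_linear (\<lambda>v::real \<times> real \<times> real. fst (snd v))"
    by (intro bounded_linear_intros)+
  have J: "det2 (fst (pd1 f p), snd (snd (pd1 f p))) (fst (pd2 f p), snd (snd (pd2 f p))) \<noteq> 0"
    using n by (simp add: lcross_eq det2_def algebra_simps)
  obtain V W \<psi> where VW: "open V" "p \<in> V" "V \<subseteq> U" "open W" and \<psi>: "\<forall>k. Ck_on k W \<psi>"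
    and image: "f ` V = (\<lambda>s. (fst s, \<psi> s, snd s)) ` W"
    and graph_minimal: "\<forall>s\<in>W. mc_numerator (\<lambda>s. (fst s, \<psi> s, snd s)) s = 0"
    by (rule local_graph[OF U smooth minimal p P Q _ J, where \<iota>="\<lambda>t s. (fst s, t, snd s)"]) simp_all
  have "born_infeld W \<psi>"
    using graph_minimal mc_numerator_graph_xz[OF VW(4) \<psi>[rule_format]] by (simp add: born_infeld_def)
  moreover have "f ` V = {(x, \<psi> (x, z), z) | x z. (x, z) \<in> W}"
    unfolding image by force
  ultimately show ?thesis
    using VW \<psi> by (auto simp: smooth_on_def)
qed

theorem theorem2p1:
  fixes f :: "real \<times> real \<Rightarrow> real \<times> real \<times> real" and U :: "(real \<times> real) set"
  assumes "open U"
    and "smooth_on U f"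
    and "\<forall>p\<in>U. regular_timelike_at f p"
    and "\<forall>p\<in>U. mean_curvature f p = 0"
    and "p \<in> U"
  shows "\<exists>V W (\<psi> :: real \<times> real \<Rightarrow> real).
           open V \<and> p \<in> V \<and> V \<subseteq> U \<and> open W \<and> smooth_on W \<psi> \<and> born_infeld W \<psi> \<and>
           (f ` V = {(x, \<psi> (x, z), z) | x z. (x, z) \<in> W}
            \<or> f ` V = {(\<psi> (y, z), y, z) | y z. (y, z) \<in> W})"
proof -
  have smooth: "\<forall>k. Ck_on k U f"
    using assms(2) by (simp add: smooth_on_def)
  have minimal: "\<forall>q\<in>U. mc_numerator f q = 0"
    using assms(3,4) mean_curvature_eq_0_iff by blast
  define n where "n = lcross (pd1 f p) (pd2 f p)"
  \<comment> \<open>The normal of a timelike surface is spacelike, so it cannot point along the z-axis.\<close>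
  have "lip n n > 0"
    using assms(3,5) lip_lcross_self[of "pd1 f p" "pd2 f p"]
    by (simp add: n_def regular_timelike_at_def fE_def fF_def fG_def)
  then have "fst n \<noteq> 0 \<or> fst (snd n) \<noteq> 0"
    by (auto simp: lip_def)
  then show ?thesis
  proof
    assume "fst n \<noteq> 0"
    then show ?thesis
      using graph_over_yz_plane[OF assms(1) smooth minimal assms(5)] unfolding n_def by blast
  next
    assume "fst (snd n) \<noteq> 0"
    then show ?thesis
      using graph_over_xz_plane[OF assms(1) smooth minimal assms(5)] unfolding n_def by blast
  qed
qed

end
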